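(* Let $S$ be a finite semigroup. The congruence $\equiv_{\mathsf{RM}}$ equals the intersection of the congruences $\equiv_{\mathsf{RM},J}$ as $J$ runs over the $\mathsf{RM}$-irreducible regular $\mathscr J$-classes of $S$. Moreover, no $\mathsf{RM}$-irreducible regular $\mathscr J$-class $J$ can be omitted from this intersection without changing the resulting congruence.
   Context: $\mathscr J$-classes are ordered by $J'\le J$ iff $S^1J'S^1\subseteq S^1JS^1$; regular means containing an idempotent. For a regular $\mathscr J$-class $J$: $s\equiv_{\mathsf{RM},J}t$ iff for all $x\in J$, $xs\in J\iff xt\in J$, and if both lie in $J$ then $xs=xt$; $\equiv_{\mathsf{RM}}=\bigcap_J\equiv_{\mathsf{RM},J}$ over all regular $J$. A regular $J$ is $\mathsf{RM}$-irreducible if $\bigcap_{J'<J}\equiv_{\mathsf{RM},J'}\not\subseteq\equiv_{\mathsf{RM},J}$ (over regular $J'<J$; the empty intersection is the universal relation). *)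

theory Defs
  imports Main
begin

definition ideal1 :: "'a::semigroup_mult set \<Rightarrow> 'a set" where
  "ideal1 A = {z. \<exists>a\<in>A. z = a \<or> (\<exists>x. z = x * a) \<or> (\<exists>y. z = a * y) \<or> (\<exists>x y. z = x * a * y)}"

definition Jrel :: "('a::semigroup_mult \<times> 'a) set" where
  "Jrel = {(a, b). ideal1 {a} = ideal1 {b}}"

definition Jclasses :: "'a::semigroup_mult set set" where
  "Jclasses = UNIV // Jrel"

definition Jle :: "'a::semigroup_mult set \<Rightarrow> 'a set \<Rightarrow> bool" where
  "Jle J' J \<longleftrightarrow> ideal1 J' \<subseteq> ideal1 J"

definition Jless :: "'a::semigroup_mult set \<Rightarrow> 'a set \<Rightarrow> bool" where
  "Jless J' J \<longleftrightarrow> Jle J' J \<and> J' \<noteq> J"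

definition regularJ :: "'a::semigroup_mult set \<Rightarrow> bool" where
  "regularJ J \<longleftrightarrow> J \<in> Jclasses \<and> (\<exists>e\<in>J. e * e = e)"

definition RMJ :: "'a::semigroup_mult set \<Rightarrow> ('a \<times> 'a) set" where
  "RMJ J = {(s, t). \<forall>x\<in>J. (x * s \<in> J \<longleftrightarrow> x * t \<in> J) \<and> (x * s \<in> J \<and> x * t \<in> J \<longrightarrow> x * s = x * t)}"

definition RM :: "('a::semigroup_mult \<times> 'a) set" where
  "RM = (\<Inter>J\<in>{J. regularJ J}. RMJ J)"

definition RM_irreducible :: "'a::semigroup_mult set \<Rightarrow> bool" where
  "RM_irreducible J \<longleftrightarrow> regularJ J \<and>
     \<not> ((\<Inter>J'\<in>{J'. regularJ J' \<and> Jless J' J}. RMJ J') \<subseteq> RMJ J)"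

end

theory Submission
  imports Defs
begin

text \<open>A regular \<open>\<J>\<close>-class that is not RM-irreducible has its congruence implied by those of
  the strictly lower regular \<open>\<J>\<close>-classes; since the \<open>\<J>\<close>-order is well founded on a finite
  semigroup, induction reduces every regular \<open>\<J>\<close>-class to irreducible ones.

  Conversely, let \<open>J\<close> be irreducible and let \<open>(s, t)\<close> be a pair respected by all lower
  regular classes but not by \<open>J\<close>, say at \<open>x \<in> J\<close>. Using an idempotent of \<open>J\<close>, write
  \<open>x = y m\<close> with \<open>y \<in> J\<close> and \<open>m \<le>\<^sub>\<J> J\<close>. Then \<open>(m s, m t)\<close> is not respected by \<open>J\<close>
  (witness \<open>y\<close>), but it is respected by every lower class, because each \<open>RMJ J'\<close> is
  compatible with left multiplication, and trivially by every class not below \<open>m\<close>.\<close>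

lemma mem_ideal1_self: "a \<in> ideal1 {a}"
  by (simp add: ideal1_def)

lemma mult_left_mem_ideal1: "(x::'a::semigroup_mult) * a \<in> ideal1 {a}"
  by (auto simp: ideal1_def)

lemma mult_right_mem_ideal1: "(a::'a::semigroup_mult) * y \<in> ideal1 {a}"
  by (auto simp: ideal1_def)

lemma mem_ideal1_trans:
  "(a::'a::semigroup_mult) \<in> ideal1 {b} \<Longrightarrow> b \<in> ideal1 {c} \<Longrightarrow> a \<in> ideal1 {c}"
  by (auto simp: ideal1_def) (metis mult.assoc)+

lemma ideal1_singleton_subset_iff:
  "ideal1 {a::'a::semigroup_mult} \<subseteq> ideal1 {b} \<longleftrightarrow> a \<in> ideal1 {b}"
  using mem_ideal1_self mem_ideal1_trans by blast

lemma ideal1_UN: "ideal1 A = (\<Union>a\<in>A. ideal1 {a})"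
  by (auto simp: ideal1_def)

lemma ideal1_mult_subset_left: "ideal1 {(x::'a::semigroup_mult) * a} \<subseteq> ideal1 {a}"
  using ideal1_singleton_subset_iff mult_left_mem_ideal1 by blast

lemma ideal1_mult_subset_right: "ideal1 {(a::'a::semigroup_mult) * y} \<subseteq> ideal1 {a}"
  using ideal1_singleton_subset_iff mult_right_mem_ideal1 by blast

lemma ideal1_idempotent:
  assumes "f * f = (f::'a::semigroup_mult)"
  shows "ideal1 {f} = {u * f * v |u v. True}"
proof (intro antisym subsetI)
  fix x assume "x \<in> ideal1 {f}"
  then consider "x = f" | u where "x = u * f" | v where "x = f * v" | u v where "x = u * f * v"
    by (auto simp: ideal1_def)
  then show "x \<in> {u * f * v |u v. True}"
  proof cases
    case 1
    then have "x = f * f * f" using assms by simp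
    then show ?thesis by blast
  next
    case (2 u)
    then have "x = u * f * f" using assms by (simp add: mult.assoc)
    then show ?thesis by blast
  next
    case (3 v)
    then have "x = f * f * v" using assms by simp
    then show ?thesis by blast
  qed blast
qed (auto simp: ideal1_def)

lemma Jclass_of_mem:
  "J \<in> Jclasses \<Longrightarrow> a \<in> J \<Longrightarrow> J = {b. ideal1 {b} = ideal1 {a}}"
  by (auto simp: Jclasses_def quotient_def Jrel_def)

lemma ideal1_Jclass:
  assumes "J \<in> Jclasses" "a \<in> J"
  shows "ideal1 J = ideal1 {a}"
  using Jclass_of_mem[OF assms] ideal1_singleton_subset_iff mem_ideal1_self
  by (subst ideal1_UN) blast

lemma Jclass_ex_mem: "J \<in> Jclasses \<Longrightarrow> \<exists>a. a \<in> J"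
  by (auto simp: Jclasses_def quotient_def Jrel_def)

lemma Jless_imp_ideal1_psubset:
  assumes "J \<in> Jclasses" "J' \<in> Jclasses" "Jless J' J"
  shows "ideal1 J' \<subset> ideal1 J"
proof -
  obtain a a' where "a \<in> J" "a' \<in> J'"
    using Jclass_ex_mem assms(1,2) by blast
  have "ideal1 J' \<noteq> ideal1 J"
  proof
    assume "ideal1 J' = ideal1 J"
    then have "ideal1 {a'} = ideal1 {a}"
      using ideal1_Jclass assms(1,2) \<open>a \<in> J\<close> \<open>a' \<in> J'\<close> by metis
    then have "J' = J"
      using Jclass_of_mem assms(1,2) \<open>a \<in> J\<close> \<open>a' \<in> J'\<close> by metis
    then show False
      using assms(3) by (simp add: Jless_def)
  qed
  then show ?thesis
    using assms(3) by (auto simp: Jless_def Jle_def)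
qed

lemma Jless_induct [consumes 1, case_names less]:
  fixes J :: "'a::{semigroup_mult, finite} set"
  assumes "J \<in> Jclasses"
    and "\<And>J. J \<in> Jclasses \<Longrightarrow> (\<And>J'. J' \<in> Jclasses \<Longrightarrow> Jless J' J \<Longrightarrow> P J') \<Longrightarrow> P J"
  shows "P J"
  using assms(1)
proof (induction "card (ideal1 J)" arbitrary: J rule: less_induct)
  case less
  show ?case
  proof (rule assms(2)[OF less.prems])
    fix J' assume "J' \<in> Jclasses" "Jless J' J"
    then have "card (ideal1 J') < card (ideal1 J)"
      by (intro psubset_card_mono finite Jless_imp_ideal1_psubset less.prems)
    then show "P J'"
      using less.hyps \<open>J' \<in> Jclasses\<close> by blast
  qed
qed

lemma mem_Jclass_mult_prefix:
  assumes "J \<in> Jclasses" "z \<in> J" "z * u * v \<in> J"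
  shows "z * u \<in> J"
proof -
  have "ideal1 {z * u * v} \<subseteq> ideal1 {z * u}" "ideal1 {z * u} \<subseteq> ideal1 {z}"
    by (rule ideal1_mult_subset_right)+
  moreover have "ideal1 {z * u * v} = ideal1 {z}"
    using Jclass_of_mem[OF assms(1,2)] assms(3) by blast
  ultimately have "ideal1 {z * u} = ideal1 {z}"
    by blast
  then show ?thesis
    using Jclass_of_mem[OF assms(1,2)] by blast
qed

lemma RMJ_mult_left:
  assumes "J \<in> Jclasses" "(s, t) \<in> RMJ J"
  shows "(m * s, m * t) \<in> RMJ J"
  unfolding RMJ_def
proof (clarify, unfold mult.assoc[symmetric])
  fix z assume "z \<in> J"
  show "(z * m * s \<in> J \<longleftrightarrow> z * m * t \<in> J) \<and>
        (z * m * s \<in> J \<and> z * m * t \<in> J \<longrightarrow> z * m * s = z * m * t)"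
  proof (cases "z * m \<in> J")
    case True
    then show ?thesis using assms(2) by (simp add: RMJ_def)
  next
    case False
    then show ?thesis using mem_Jclass_mult_prefix[OF assms(1) \<open>z \<in> J\<close>] by blast
  qed
qed

lemma RMJ_mult_left_if_not_below:
  assumes "J \<in> Jclasses" "\<not> ideal1 J \<subseteq> ideal1 {m}"
  shows "(m * s, m * t) \<in> RMJ J"
proof -
  have "z * m \<notin> J" if "z \<in> J" for z
    using ideal1_Jclass[OF assms(1)] ideal1_mult_subset_left assms(2) by metis
  then have "z * m * r \<notin> J" if "z \<in> J" for z r
    using mem_Jclass_mult_prefix[OF assms(1)] that by blast
  then show ?thesis
    by (simp add: RMJ_def mult.assoc[symmetric])
qed

lemma not_RMJ_factor_through_ideal:
  assumes "regularJ J" "(s, t) \<notin> RMJ J"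
  obtains m where "ideal1 {m} \<subseteq> ideal1 J" "(m * s, m * t) \<notin> RMJ J"
proof -
  obtain f where f: "f \<in> J" "f * f = f"
    using assms(1) by (auto simp: regularJ_def)
  have J: "J \<in> Jclasses"
    using assms(1) by (simp add: regularJ_def)
  obtain x where x: "x \<in> J"
    "\<not> ((x * s \<in> J \<longleftrightarrow> x * t \<in> J) \<and> (x * s \<in> J \<and> x * t \<in> J \<longrightarrow> x * s = x * t))"
    using assms(2) by (auto simp: RMJ_def)
  have "x \<in> ideal1 {f}"
    using J f(1) x(1) Jclass_of_mem mem_ideal1_self by blast
  then obtain u v where uv: "x = u * f * v"
    using ideal1_idempotent[OF f(2)] by blast
  define y m where "y = u * f" and "m = f * v"
  have "x = y * m"
    using uv f(2) by (metis y_def m_def mult.assoc)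
  have "ideal1 {x} \<subseteq> ideal1 {y}" "ideal1 {y} \<subseteq> ideal1 {f}"
    using uv ideal1_mult_subset_right ideal1_mult_subset_left by (simp_all add: y_def)
  then have "y \<in> J"
    using Jclass_of_mem[OF J f(1)] Jclass_of_mem[OF J x(1)] by blast
  then have "(m * s, m * t) \<notin> RMJ J"
    using x \<open>x = y * m\<close> by (auto simp: RMJ_def mult.assoc)
  moreover have "ideal1 {m} \<subseteq> ideal1 J"
    using ideal1_mult_subset_right ideal1_Jclass[OF J f(1)] by (simp add: m_def)
  ultimately show ?thesis
    using that by blast
qed

lemma RM_subset_RMJ: "regularJ J \<Longrightarrow> RM \<subseteq> RMJ J"
  unfolding RM_def by blast

lemma Inter_RM_irreducible_subset_RMJ:
  fixes J :: "'a::{semigroup_mult, finite} set"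
  assumes "regularJ J"
  shows "(\<Inter>J\<in>{J. RM_irreducible J}. RMJ J) \<subseteq> RMJ J"
proof -
  have "J \<in> Jclasses"
    using assms by (simp add: regularJ_def)
  then show ?thesis
    using assms
  proof (induction J rule: Jless_induct)
    case (less J)
    show ?case
    proof (cases "RM_irreducible J")
      case False
      then have "(\<Inter>J'\<in>{J'. regularJ J' \<and> Jless J' J}. RMJ J') \<subseteq> RMJ J"
        using less.prems by (simp add: RM_irreducible_def)
      then show ?thesis
        using less.IH by (force simp: regularJ_def)
    qed blast
  qed
qed

lemma RM_eq_Inter_RM_irreducible:
  "(RM :: ('a::{semigroup_mult, finite} \<times> 'a) set) = (\<Inter>J\<in>{J. RM_irreducible J}. RMJ J)"
proof
  show "RM \<subseteq> (\<Inter>J\<in>{J. RM_irreducible J}. RMJ (J::'a set))"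
    using RM_subset_RMJ by (auto simp: RM_irreducible_def)
  show "(\<Inter>J\<in>{J. RM_irreducible J}. RMJ (J::'a set)) \<subseteq> RM"
    unfolding RM_def using Inter_RM_irreducible_subset_RMJ by blast
qed

lemma RM_irreducible_not_redundant:
  assumes "RM_irreducible J"
  shows "\<not> (\<Inter>J'\<in>{J'. regularJ J' \<and> J' \<noteq> J}. RMJ J') \<subseteq> RMJ J"
proof -
  have reg: "regularJ J"
    using assms by (simp add: RM_irreducible_def)
  obtain s t where st: "(s, t) \<in> (\<Inter>J'\<in>{J'. regularJ J' \<and> Jless J' J}. RMJ J')"
    "(s, t) \<notin> RMJ J"
    using assms by (auto simp: RM_irreducible_def)
  obtain m where m: "ideal1 {m} \<subseteq> ideal1 J" "(m * s, m * t) \<notin> RMJ J"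
    using not_RMJ_factor_through_ideal[OF reg st(2)] by blast
  have "(m * s, m * t) \<in> RMJ J'" if "regularJ J'" "J' \<noteq> J" for J'
  proof (cases "ideal1 J' \<subseteq> ideal1 {m}")
    case True
    with m(1) that have "Jless J' J"
      by (auto simp: Jless_def Jle_def)
    then have "(s, t) \<in> RMJ J'"
      using st(1) that(1) by blast
    with that(1) show ?thesis
      unfolding regularJ_def by (blast intro: RMJ_mult_left)
  next
    case False
    with that(1) show ?thesis
      unfolding regularJ_def by (blast intro: RMJ_mult_left_if_not_below)
  qed
  with m(2) show ?thesis
    by blast
qed

theorem proposition2p3:
  fixes dummy :: "'a::{semigroup_mult, finite}"
  shows "(RM :: ('a \<times> 'a) set) = (\<Inter>J\<in>{J. RM_irreducible J}. RMJ J)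
    \<and> (\<forall>J :: 'a set. RM_irreducible J \<longrightarrow>
          (\<Inter>J'\<in>{J'. RM_irreducible J' \<and> J' \<noteq> J}. RMJ J') \<noteq> (RM :: ('a \<times> 'a) set))"
proof (intro conjI allI impI)
  show "(RM :: ('a \<times> 'a) set) = (\<Inter>J\<in>{J. RM_irreducible J}. RMJ J)"
    by (rule RM_eq_Inter_RM_irreducible)
  fix J :: "'a set"
  assume irr: "RM_irreducible J"
  show "(\<Inter>J'\<in>{J'. RM_irreducible J' \<and> J' \<noteq> J}. RMJ J') \<noteq> RM"
  proof
    assume eq: "(\<Inter>J'\<in>{J'. RM_irreducible J' \<and> J' \<noteq> J}. RMJ J') = RM"
    have "(\<Inter>J'\<in>{J'. regularJ J' \<and> J' \<noteq> J}. RMJ J') \<subseteq>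
          (\<Inter>J'\<in>{J'. RM_irreducible J' \<and> J' \<noteq> J}. RMJ J')"
      by (rule INF_superset_mono) (auto simp: RM_irreducible_def)
    also have "\<dots> = RM"
      by (fact eq)
    also have "\<dots> \<subseteq> RMJ J"
      using irr by (simp add: RM_subset_RMJ RM_irreducible_def)
    finally show False
      using RM_irreducible_not_redundant[OF irr] by contradiction
  qed
qed

end
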